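(* Let $T:\mathrm{PSym}(3)\to\mathrm{Sym}(3)$ be continuous and isotropic (i.e. $T(Q^TUQ)=Q^TT(U)Q$ for all $Q\in\mathrm O(3)$, $U\in\mathrm{PSym}(3)$), such that $T(U)=0$ holds if and only if $U=\mathbb 1$, and such that $T(U_1U_2)=T(U_1)+T(U_2)$ for all commuting $U_1,U_2\in\mathrm{PSym}(3)$. Then there exist constants $G,\Lambda\in\mathbb R$ with $G\neq0$ and $3\Lambda+2G\neq0$ such that $$T(U)=2G\,\log U+\Lambda\,\mathrm{tr}(\log U)\,\mathbb 1\quad\text{for all }U\in\mathrm{PSym}(3),$$ equivalently constants $G,K\in\mathbb R\setminus\{0\}$ with $T(U)=2G\,\mathrm{dev}_3\log U+K\,\mathrm{tr}(\log U)\,\mathbb 1$.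
   Context: $\mathrm{Sym}(3)$: real symmetric $3\times3$ matrices; $\mathrm{PSym}(3)$: symmetric positive definite ones; $\mathbb 1$: identity; $\mathrm O(3)$: orthogonal group; $\log$: principal matrix logarithm $\mathrm{PSym}(3)\to\mathrm{Sym}(3)$; $\mathrm{dev}_3X=X-\tfrac13\mathrm{tr}(X)\mathbb 1$. *)

theory Defs
  imports "HOL-Analysis.Analysis"
begin

type_synonym mat3 = "real^3^3"

definition Sym3 :: "mat3 set" where
  "Sym3 = {A. transpose A = A}"

definition PSym3 :: "mat3 set" where
  "PSym3 = {A. transpose A = A \<and> (\<forall>x::real^3. x \<noteq> 0 \<longrightarrow> x \<bullet> (A *v x) > 0)}"

fun mpow :: "mat3 \<Rightarrow> nat \<Rightarrow> mat3" where
  "mpow A 0 = mat 1"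
| "mpow A (Suc k) = A ** mpow A k"

definition mexp :: "mat3 \<Rightarrow> mat3" where
  "mexp A = (\<Sum>k. (1 / fact k) *\<^sub>R mpow A k)"

definition mlog :: "mat3 \<Rightarrow> mat3" where
  "mlog U = (THE X. X \<in> Sym3 \<and> mexp X = U)"

definition dev3 :: "mat3 \<Rightarrow> mat3" where
  "dev3 X = X - (trace X / 3) *\<^sub>R mat 1"

end

theory Submission
  imports Defs
begin

text \<open>Restricted to the diagonal matrices \<open>exp (diag x)\<close>, which commute, \<open>T\<close> is additive in \<open>x\<close>;
  being continuous it is linear (Cauchy's functional equation). Isotropy under the coordinate
  reflections forces its values to be diagonal, and isotropy under the coordinate permutations forces
  \<open>T (exp (diag x)) = a diag x + b (\<Sum>\<^sub>i x\<^sub>i) \<one>\<close>. By the spectral theorem every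
  \<open>U \<in> PSym(3)\<close> is \<open>Q\<^sup>T exp (diag x) Q\<close> with \<open>Q\<close> orthogonal, and then \<open>log U = Q\<^sup>T diag x Q\<close>, so
  isotropy carries the formula over to all of \<open>PSym(3)\<close>. Finally \<open>T U \<noteq> 0\<close> at
  \<open>U = exp (diag (1, -1, 0))\<close> and \<open>U = exp (diag (1, 1, 1))\<close> gives \<open>a \<noteq> 0\<close> and \<open>a + 3 b \<noteq> 0\<close>.\<close>

section \<open>Cauchy's functional equation\<close>

lemma additive_continuous_real_scaleR:
  fixes f :: "real \<Rightarrow> 'a::real_normed_vector"
  assumes add: "\<And>s t. f (s + t) = f s + f t" and cont: "continuous_on UNIV f"
  shows "f t = t *\<^sub>R f 1"
proof -
  have f0: "f 0 = 0" using add[of 0 0] by simp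
  have fneg: "f (- s) = - f s" for s
    using add[of s "- s"] f0 by (simp add: eq_neg_iff_add_eq_0 add.commute)
  have fnat: "f (of_nat n * s) = of_nat n *\<^sub>R f s" for n s
    by (induction n) (simp_all add: f0 distrib_right add scaleR_add_left)
  have fint: "f (of_int k * s) = of_int k *\<^sub>R f s" for k s
  proof (cases "k \<ge> 0")
    case True
    then obtain n where "k = int n" by (metis nonneg_eq_int)
    then show ?thesis using fnat by simp
  next
    case False
    then have "k = - int (nat (- k))" by simp
    then obtain n where "k = - int n" by blast
    then show ?thesis using fnat[of n s] fneg[of "of_nat n * s"] by simp
  qed
  have rat: "f q = q *\<^sub>R f 1" if q: "q \<in> \<rat>" for q
  proof -
    obtain a b where b: "b > 0" "q = of_int a / of_int b" using Rats_cases'[OF q] by metis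
    have "of_int b *\<^sub>R f q = f (of_int b * q)" using fint by simp
    also have "of_int b * q = of_int a * 1" using b by simp
    also have "f (of_int a * 1) = of_int a *\<^sub>R f 1" by (rule fint)
    finally have "(1 / of_int b) *\<^sub>R (of_int b *\<^sub>R f q) = (1 / of_int b) *\<^sub>R (of_int a *\<^sub>R f 1)"
      by (rule arg_cong)
    then show ?thesis using b by simp
  qed
  have "closed {t. f t = t *\<^sub>R f 1}"
    by (rule closed_Collect_eq[OF cont]) (intro continuous_intros)
  moreover have "\<rat> \<subseteq> {t. f t = t *\<^sub>R f 1}" using rat by blast
  ultimately have "closure \<rat> \<subseteq> {t. f t = t *\<^sub>R f 1}"
    by (simp add: closure_minimal)
  then show ?thesis using Rats_closure_real by auto
qed

lemma additive_continuous_imp_linear: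
  fixes f :: "'a::real_normed_vector \<Rightarrow> 'b::real_normed_vector"
  assumes add: "\<And>x y. f (x + y) = f x + f y" and cont: "continuous_on UNIV f"
  shows "linear f"
proof (rule linearI)
  fix t v
  have "continuous_on UNIV (\<lambda>t. f (t *\<^sub>R v))"
    by (rule continuous_on_compose2[OF cont]) (auto intro: continuous_intros)
  then show "f (t *\<^sub>R v) = t *\<^sub>R f v"
    using additive_continuous_real_scaleR[of "\<lambda>t. f (t *\<^sub>R v)" t]
    by (simp add: scaleR_add_left add)
qed (rule add)

section \<open>Spectral theorem for symmetric 3 by 3 matrices\<close>

lemma symmetric_matrix_inner_commute:
  fixes A :: "real^'n^'n"
  assumes "transpose A = A"
  shows "x \<bullet> (A *v y) = (A *v x) \<bullet> y"
  by (metis assms dot_lmul_matrix transpose_matrix_vector)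

lemma quadratic_nonpos_imp_linear_coeff_zero:
  fixes c d :: real
  assumes "\<And>t. 2 * t * c + t\<^sup>2 * d \<le> 0"
  shows "c = 0"
proof -
  define e where "e = \<bar>d\<bar> + 1"
  have e: "e > 0" "2 * e + d > 0" unfolding e_def by auto
  have "2 * (c / e) * c + (c / e)\<^sup>2 * d = c\<^sup>2 * (2 * e + d) / e\<^sup>2"
    using e by (simp add: field_simps power2_eq_square)
  then have "c\<^sup>2 * (2 * e + d) \<le> 0"
    using assms[of "c / e"] e by (simp add: divide_le_0_iff)
  then have "c\<^sup>2 \<le> 0" using e by (simp add: mult_le_0_iff)
  then show ?thesis by simp
qed

text \<open>First variation of the Rayleigh quotient at a maximiser on the unit sphere of \<open>S\<close>.\<close>
lemma symmetric_rayleigh_max_orthogonal: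
  fixes A :: "real^'n^'n"
  assumes sym: "transpose A = A" and S: "subspace S"
    and v: "v \<in> S" "norm v = 1"
    and max: "\<And>y. y \<in> S \<Longrightarrow> norm y = 1 \<Longrightarrow> y \<bullet> (A *v y) \<le> v \<bullet> (A *v v)"
    and w: "w \<in> S" "w \<bullet> v = 0"
  shows "w \<bullet> (A *v v) = 0"
proof (rule quadratic_nonpos_imp_linear_coeff_zero)
  fix t :: real
  define l where "l = v \<bullet> (A *v v)"
  define y where "y = v + t *\<^sub>R w"
  have yy: "y \<bullet> y = 1 + t\<^sup>2 * (w \<bullet> w)"
    using v w unfolding y_def
    by (simp add: norm_eq_1 inner_add_left inner_add_right inner_commute power2_eq_square)
  then have ypos: "y \<bullet> y > 0" by (simp add: add_pos_nonneg)
  have "v \<bullet> (A *v w) = w \<bullet> (A *v v)"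
    using symmetric_matrix_inner_commute[OF sym, of v w] by (simp add: inner_commute)
  then have fy: "y \<bullet> (A *v y) = l + 2 * t * (w \<bullet> (A *v v)) + t\<^sup>2 * (w \<bullet> (A *v w))"
    unfolding y_def l_def
    by (simp add: matrix_vector_right_distrib matrix_vector_mult_scaleR inner_add_left
        inner_add_right algebra_simps power2_eq_square)
  define z where "z = inverse (norm y) *\<^sub>R y"
  have "z \<in> S" "norm z = 1"
    unfolding z_def using v w S ypos by (auto simp: subspace_add subspace_mul y_def)
  then have "z \<bullet> (A *v z) \<le> l" unfolding l_def by (rule max)
  moreover have "z \<bullet> (A *v z) = y \<bullet> (A *v y) / (y \<bullet> y)" unfolding z_def
    by (simp add: matrix_vector_mult_scaleR power2_norm_eq_inner[symmetric] power2_eq_square field_simps)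
  ultimately have "y \<bullet> (A *v y) \<le> l * (y \<bullet> y)" using ypos by (simp add: divide_le_eq)
  then show "2 * t * (w \<bullet> (A *v v)) + t\<^sup>2 * (w \<bullet> (A *v w) - l * (w \<bullet> w)) \<le> 0"
    unfolding fy yy by (simp add: algebra_simps)
qed

lemma symmetric_invariant_subspace_eigenvector:
  fixes A :: "real^'n^'n"
  assumes sym: "transpose A = A" and S: "subspace S"
    and inv: "\<And>x. x \<in> S \<Longrightarrow> A *v x \<in> S" and x: "x \<in> S" "x \<noteq> 0"
  obtains v l where "v \<in> S" "norm v = 1" "A *v v = l *\<^sub>R v"
proof -
  let ?K = "S \<inter> sphere 0 1"
  have K: "compact ?K" by (intro closed_Int_compact closed_subspace S compact_sphere)
  have "inverse (norm x) *\<^sub>R x \<in> ?K" using x S by (simp add: subspace_mul)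
  then have K0: "?K \<noteq> {}" by blast
  have "continuous_on ?K (\<lambda>y. y \<bullet> (A *v y))" by (intro continuous_intros)
  from continuous_attains_sup[OF K K0 this] obtain v
    where vK: "v \<in> ?K" and max: "\<And>y. y \<in> ?K \<Longrightarrow> y \<bullet> (A *v y) \<le> v \<bullet> (A *v v)"
    by blast
  define l where "l = v \<bullet> (A *v v)"
  define w where "w = A *v v - l *\<^sub>R v"
  have v: "v \<in> S" "norm v = 1" using vK by auto
  have w: "w \<in> S" "w \<bullet> v = 0"
    using inv[of v] v S unfolding w_def l_def
    by (simp_all add: subspace_diff subspace_mul norm_eq_1 inner_diff_left inner_diff_right inner_commute)
  have "w \<bullet> (A *v v) = 0"
    using max by (intro symmetric_rayleigh_max_orthogonal[OF sym S v _ w]) simp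
  then have "w \<bullet> w = 0" using w unfolding w_def by (simp add: inner_diff_left inner_diff_right inner_commute)
  then show ?thesis using that[of v l] v unfolding w_def by simp
qed

lemma symmetric_eigenvector_orthogonal_to_eigenvectors:
  fixes A :: "real^'n^'n"
  assumes sym: "transpose A = A" and dim: "dim B < CARD('n)"
    and eig: "\<And>b. b \<in> B \<Longrightarrow> \<exists>l. A *v b = l *\<^sub>R b"
  obtains v l where "norm v = 1" "\<forall>b\<in>B. b \<bullet> v = 0" "A *v v = l *\<^sub>R v"
proof -
  let ?S = "{x. \<forall>b\<in>B. orthogonal b x}"
  have inv: "A *v x \<in> ?S" if "x \<in> ?S" for x
  proof -
    have "b \<bullet> (A *v x) = 0" if "b \<in> B" for b
      using eig[OF that] symmetric_matrix_inner_commute[OF sym, of b x] \<open>x \<in> ?S\<close> that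
      by (auto simp: orthogonal_def)
    then show ?thesis by (simp add: orthogonal_def)
  qed
  obtain x :: "real^'n" where "x \<noteq> 0" "\<And>y. y \<in> span B \<Longrightarrow> orthogonal x y"
    using orthogonal_to_subspace_exists[of B] dim by auto
  then have "x \<in> ?S" "x \<noteq> 0" by (auto simp: span_base orthogonal_commute)
  from symmetric_invariant_subspace_eigenvector[OF sym subspace_orthogonal_to_vectors inv this]
  show ?thesis using that by (auto simp: orthogonal_def)
qed

definition diag :: "real^'n \<Rightarrow> real^'n^'n" where
  "diag d = (\<chi> i j. if i = j then d$i else 0)"

lemma diag_nth [simp]: "diag d $ i $ j = (if i = j then d$i else 0)"
  by (simp add: diag_def)

lemma matrix_mult_diag_right_nth: "(X ** diag a)$i$j = X$i$j * a$j"
  by (simp add: matrix_matrix_mult_def if_distrib[of "\<lambda>x. _ * x"] sum.delta' cong: if_cong)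

lemma diag_matrix_mult_left_nth: "(diag a ** X)$i$j = a$i * X$i$j"
  by (simp add: matrix_matrix_mult_def if_distrib[of "\<lambda>x. x * _"] sum.delta cong: if_cong)

lemma diag_mult_diag: "diag a ** diag b = diag (\<chi> i. a$i * b$i)"
  by (simp add: vec_eq_iff matrix_mult_diag_right_nth)

lemma mat_1_eq_diag: "mat 1 = diag (\<chi> i. 1)"
  by (simp add: vec_eq_iff mat_def)

lemma transpose_diag [simp]: "transpose (diag d) = diag d"
  by (simp add: vec_eq_iff transpose_def)

lemma diag_mult_vector: "diag v *v y = (\<chi> i. v$i * y$i)"
  by (simp add: vec_eq_iff matrix_vector_mult_def if_distrib[of "\<lambda>x. x * _"] sum.delta cong: if_cong)

lemma orthogonal_matrix_conj_diag_symmetric: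
  "transpose (transpose Q ** diag d ** Q) = transpose Q ** diag d ** Q"
  by (simp only: matrix_transpose_mul transpose_transpose transpose_diag matrix_mul_assoc)

lemma trace_orthogonal_conj:
  fixes Q :: "real^'n^'n"
  assumes "orthogonal_matrix Q"
  shows "trace (transpose Q ** M ** Q) = trace M"
proof -
  have "trace ((transpose Q ** M) ** Q) = trace (Q ** (transpose Q ** M))" by (rule trace_mul_sym)
  then show ?thesis using assms by (simp add: matrix_mul_assoc orthogonal_matrix_def)
qed

lemma symmetric_3_diagonalization:
  fixes A :: "mat3"
  assumes sym: "transpose A = A"
  obtains Q d where "orthogonal_matrix Q" "A = transpose Q ** diag d ** Q"
proof -
  obtain v1 l1 where v1: "norm v1 = 1" "A *v v1 = l1 *\<^sub>R v1"
    by (rule symmetric_eigenvector_orthogonal_to_eigenvectors[OF sym, of "{}"]) auto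
  have "dim {v1} < CARD(3)" by (simp add: dim_singleton)
  then obtain v2 l2 where v2: "norm v2 = 1" "\<forall>b\<in>{v1}. b \<bullet> v2 = 0" "A *v v2 = l2 *\<^sub>R v2"
    by (rule symmetric_eigenvector_orthogonal_to_eigenvectors[OF sym]) (use v1 in auto)
  have "dim {v1, v2} < CARD(3)"
    using dim_le_card'[of "{v1, v2}"] by (simp add: card_insert_if split: if_splits)
  then obtain v3 l3 where v3: "norm v3 = 1" "\<forall>b\<in>{v1, v2}. b \<bullet> v3 = 0" "A *v v3 = l3 *\<^sub>R v3"
    by (rule symmetric_eigenvector_orthogonal_to_eigenvectors[OF sym]) (use v1 v2 in auto)
  define Q :: "mat3" where "Q = vector [v1, v2, v3]"
  define d :: "real^3" where "d = vector [l1, l2, l3]"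
  have n: "v1 \<bullet> v1 = 1" "v2 \<bullet> v2 = 1" "v3 \<bullet> v3 = 1"
    using v1 v2 v3 by (simp_all add: norm_eq_1)
  have o: "v2 \<bullet> v1 = 0" "v3 \<bullet> v1 = 0" "v3 \<bullet> v2 = 0" using v2 v3 by (simp_all add: inner_commute)
  have row: "(X ** transpose Y)$i$j = X$i \<bullet> Y$j" for X Y :: "mat3" and i j
    by (simp add: matrix_matrix_mult_def transpose_def inner_vec_def mult.commute)
  have QQ: "Q ** transpose Q = mat 1"
    by (simp add: vec_eq_iff forall_3 row Q_def n o v2 v3 mat_def)
  then have QQ': "transpose Q ** Q = mat 1" using matrix_left_right_inverse by blast
  have "(Q ** A)$i = Q$i v* A" for i
    by (simp add: vec_eq_iff matrix_matrix_mult_def vector_matrix_mult_def mult.commute)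
  then have QA: "(Q ** A)$i = A *v (Q$i)" for i
    using sym by (metis transpose_matrix_vector)
  have Qrows: "Q$1 = v1" "Q$2 = v2" "Q$3 = v3" by (simp_all add: Q_def)
  have QAQ: "Q ** A ** transpose Q = diag d"
    by (simp add: vec_eq_iff forall_3 row QA Qrows d_def v1 v2 v3 n o)
  have "transpose Q ** diag d ** Q = (transpose Q ** Q) ** A ** (transpose Q ** Q)"
    unfolding QAQ[symmetric] by (simp add: matrix_mul_assoc)
  then have "A = transpose Q ** diag d ** Q" using QQ' by simp
  with QQ QQ' show ?thesis by (intro that) (auto simp: orthogonal_matrix_def)
qed

section \<open>Exponential and logarithm of diagonalised matrices\<close>

definition diag_exp :: "real^'n \<Rightarrow> real^'n^'n" where
  "diag_exp x = diag (\<chi> i. exp (x$i))"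

lemma diag_as_sum_axis: "diag v = (\<Sum>i\<in>UNIV. v$i *\<^sub>R diag (axis i 1))"
  by (simp add: vec_eq_iff axis_def if_distrib[of "\<lambda>x. _ * x"] sum.delta cong: if_cong)

lemma mpow_diag: "mpow (diag d) k = diag (\<chi> i. d$i ^ k)"
  by (induction k) (simp_all add: mat_1_eq_diag diag_mult_diag)

lemma mexp_diag_sums: "(\<lambda>k. (1 / fact k) *\<^sub>R mpow (diag d) k) sums diag_exp d"
proof -
  have "(\<lambda>k. \<Sum>i\<in>UNIV. (d$i ^ k /\<^sub>R fact k) *\<^sub>R diag (axis i 1))
          sums (\<Sum>i\<in>UNIV. exp (d$i) *\<^sub>R (diag (axis i 1) :: mat3))"
    by (intro sums_sum sums_scaleR_left exp_converges)
  then show ?thesis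
    unfolding diag_exp_def mpow_diag diag_as_sum_axis[of "\<chi> i. d$i ^ _"]
      diag_as_sum_axis[of "\<chi> i. exp (d$i)"]
    by (simp add: divide_inverse mult.commute scaleR_sum_right)
qed

lemma mpow_orthogonal_conj:
  assumes "orthogonal_matrix Q"
  shows "mpow (transpose Q ** X ** Q) k = transpose Q ** mpow X k ** Q"
proof (induction k)
  case 0
  then show ?case using assms by (simp add: orthogonal_matrix_def)
next
  case (Suc k)
  have QQ: "Q ** transpose Q = mat 1" using assms by (simp add: orthogonal_matrix_def)
  have "mpow (transpose Q ** X ** Q) (Suc k) = transpose Q ** X ** (Q ** transpose Q) ** mpow X k ** Q"
    using Suc by (simp add: matrix_mul_assoc)
  then show ?case using QQ by (simp add: matrix_mul_assoc)
qed

lemma matrix_add_rdistrib: "(A + B) ** C = A ** C + B ** (C::'a::semiring_1^'n^'m)"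
  by (simp add: vec_eq_iff matrix_matrix_mult_def sum.distrib distrib_right)

lemma bounded_linear_conj: "bounded_linear (\<lambda>M::real^'n^'n. transpose Q ** M ** Q)"
proof -
  have "linear (\<lambda>M::real^'n^'n. transpose Q ** M ** Q)"
    by (rule linearI)
      (simp_all add: matrix_add_ldistrib matrix_add_rdistrib matrix_scalar_ac scalar_matrix_assoc)
  then show ?thesis by (simp add: linear_conv_bounded_linear)
qed

lemma mexp_orthogonal_conj_diag:
  assumes Q: "orthogonal_matrix Q"
  shows "mexp (transpose Q ** diag d ** Q) = transpose Q ** diag_exp d ** Q"
proof -
  have "(\<lambda>k. transpose Q ** ((1 / fact k) *\<^sub>R mpow (diag d) k) ** Q) sums (transpose Q ** diag_exp d ** Q)"
    by (rule bounded_linear.sums[OF bounded_linear_conj mexp_diag_sums])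
  then show ?thesis
    unfolding mexp_def using mpow_orthogonal_conj[OF Q]
    by (simp add: matrix_scalar_ac scalar_matrix_assoc sums_unique[symmetric])
qed

text \<open>Conjugating by \<open>R = Q P\<^sup>T\<close> intertwines the two diagonal matrices, hence \<open>R\<close> only links
  equal exponentials, i.e. equal entries.\<close>
lemma orthogonal_conj_diag_exp_inj:
  fixes P Q :: "real^'n^'n"
  assumes P: "orthogonal_matrix P" and Q: "orthogonal_matrix Q"
    and eq: "transpose P ** diag_exp e ** P = transpose Q ** diag_exp d ** Q"
  shows "transpose P ** diag e ** P = transpose Q ** diag d ** Q"
proof -
  have PP: "P ** transpose P = mat 1" "transpose P ** P = mat 1"
    and QQ: "Q ** transpose Q = mat 1" "transpose Q ** Q = mat 1"
    using P Q by (auto simp: orthogonal_matrix_def)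
  define R where "R = Q ** transpose P"
  have "R ** diag_exp e = Q ** transpose P ** diag_exp e ** (P ** transpose P)"
    using PP unfolding R_def by simp
  also have "\<dots> = Q ** (transpose Q ** diag_exp d ** Q) ** transpose P"
    unfolding eq[symmetric] by (simp add: matrix_mul_assoc)
  also have "\<dots> = (Q ** transpose Q) ** diag_exp d ** (Q ** transpose P)"
    by (simp add: matrix_mul_assoc)
  also have "\<dots> = diag_exp d ** R" using QQ unfolding R_def by simp
  finally have "R$i$j * exp (e$j) = exp (d$i) * R$i$j" for i j
    by (simp add: diag_exp_def vec_eq_iff matrix_mult_diag_right_nth diag_matrix_mult_left_nth)
  then have "R$i$j * e$j = d$i * R$i$j" for i j
    by (metis exp_inj_iff mult.commute mult_cancel_left)
  then have RE: "R ** diag e = diag d ** R"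
    by (simp add: vec_eq_iff matrix_mult_diag_right_nth diag_matrix_mult_left_nth)
  have RP: "R ** P = Q" using PP unfolding R_def by (simp add: matrix_mul_assoc[symmetric])
  have QR: "transpose Q ** R = transpose P" using QQ unfolding R_def by (simp add: matrix_mul_assoc)
  have "transpose Q ** diag d ** Q = transpose Q ** (diag d ** R) ** P"
    using RP by (simp add: matrix_mul_assoc[symmetric])
  also have "\<dots> = (transpose Q ** R) ** diag e ** P"
    unfolding RE[symmetric] by (simp add: matrix_mul_assoc)
  also have "\<dots> = transpose P ** diag e ** P" using QR by simp
  finally show ?thesis by (rule sym)
qed

lemma mlog_orthogonal_conj_diag_exp:
  fixes Q :: "mat3"
  assumes Q: "orthogonal_matrix Q"
  shows "mlog (transpose Q ** diag_exp d ** Q) = transpose Q ** diag d ** Q"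
  unfolding mlog_def
proof (rule the_equality)
  show "transpose Q ** diag d ** Q \<in> Sym3 \<and> mexp (transpose Q ** diag d ** Q) = transpose Q ** diag_exp d ** Q"
    using orthogonal_matrix_conj_diag_symmetric mexp_orthogonal_conj_diag[OF Q] by (simp add: Sym3_def)
next
  fix X assume X: "X \<in> Sym3 \<and> mexp X = transpose Q ** diag_exp d ** Q"
  then obtain P e where P: "orthogonal_matrix P" "X = transpose P ** diag e ** P"
    using symmetric_3_diagonalization by (auto simp: Sym3_def)
  then have "transpose P ** diag_exp e ** P = transpose Q ** diag_exp d ** Q"
    using X mexp_orthogonal_conj_diag by auto
  then show "X = transpose Q ** diag d ** Q"
    using orthogonal_conj_diag_exp_inj[OF P(1) Q] P(2) by simp
qed

lemma diag_in_PSym3: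
  fixes v :: "real^3"
  assumes pos: "\<And>i. v$i > 0"
  shows "diag v \<in> PSym3"
proof -
  have "x \<bullet> (diag v *v x) > 0" if x0: "x \<noteq> 0" for x :: "real^3"
  proof -
    have "x \<bullet> (diag v *v x) = (\<Sum>i\<in>UNIV. v$i * (x$i)\<^sup>2)"
      by (simp add: diag_mult_vector inner_vec_def power2_eq_square mult_ac)
    moreover obtain i where "x$i \<noteq> 0" using x0 by (metis vec_eq_iff zero_index)
    then have "v$i * (x$i)\<^sup>2 > 0" using pos by simp
    then have "(\<Sum>i\<in>UNIV. v$i * (x$i)\<^sup>2) > 0"
      using pos by (intro sum_pos2[where i = i]) (auto simp: less_imp_le)
    ultimately show ?thesis by simp
  qed
  then show ?thesis by (simp add: PSym3_def)
qed

lemma diag_exp_in_PSym3: "diag_exp x \<in> PSym3"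
  unfolding diag_exp_def by (rule diag_in_PSym3) simp

lemma diag_exp_add: "diag_exp (x + y) = diag_exp x ** diag_exp y"
  by (simp add: diag_exp_def diag_mult_diag exp_add)

lemma continuous_on_diag_exp: "continuous_on UNIV (diag_exp :: real^'n \<Rightarrow> real^'n^'n)"
proof -
  have eq: "diag_exp = (\<lambda>x::real^'n. \<Sum>i\<in>UNIV. exp (x$i) *\<^sub>R diag (axis i 1))"
    by (rule ext) (simp add: diag_exp_def diag_as_sum_axis[of "\<chi> i. exp (_$i)"])
  show ?thesis unfolding eq by (intro continuous_intros)
qed

lemma PSym3_orthogonal_conj_diag_exp:
  assumes U: "U \<in> PSym3"
  obtains Q x where "orthogonal_matrix Q" "U = transpose Q ** diag_exp x ** Q"
proof -
  obtain Q u where Q: "orthogonal_matrix Q" and U_eq: "U = transpose Q ** diag u ** Q"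
    using U symmetric_3_diagonalization by (auto simp: PSym3_def)
  have QQ: "Q ** transpose Q = mat 1" using Q by (simp add: orthogonal_matrix_def)
  have pos: "u$i > 0" for i
  proof -
    define x where "x = transpose Q *v axis i 1"
    have Qx: "Q *v x = axis i 1"
      unfolding x_def by (simp del: transpose_matrix_vector add: matrix_vector_mul_assoc QQ)
    then have "x \<noteq> 0" by (auto simp: axis_eq_0_iff)
    then have pos: "0 < x \<bullet> (U *v x)" using U by (simp add: PSym3_def)
    have "U *v x = transpose Q *v (diag u *v axis i 1)"
      using U_eq Qx by (simp del: transpose_matrix_vector add: matrix_vector_mul_assoc[symmetric])
    then have "x \<bullet> (U *v x) = axis i 1 \<bullet> (Q *v (transpose Q *v (diag u *v axis i 1)))"
      by (simp add: x_def dot_lmul_matrix[symmetric])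
    also have "\<dots> = axis i 1 \<bullet> (diag u *v axis i 1)"
      using QQ by (simp del: transpose_matrix_vector add: matrix_vector_mul_assoc)
        (metis matrix_mul_assoc matrix_mul_lid)
    also have "\<dots> = u$i"
      by (simp add: diag_mult_vector inner_vec_def axis_def if_distrib[of "\<lambda>x. x * _"] cong: if_cong)
    finally show ?thesis using pos by simp
  qed
  have "diag u = diag_exp (\<chi> i. ln (u$i))" using pos by (simp add: diag_exp_def)
  with Q U_eq show ?thesis by (intro that) auto
qed

section \<open>Permutation-equivariant linear maps into diagonal matrices\<close>

definition perm_matrix :: "('n \<Rightarrow> 'n) \<Rightarrow> real^'n^'n" where
  "perm_matrix p = (\<chi> i j. if i = p j then 1 else 0)"

lemma perm_matrix_conj_nth: "(transpose (perm_matrix p) ** M ** perm_matrix p)$i$j = M$(p i)$(p j)"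
proof -
  have "(transpose (perm_matrix p) ** M)$i$l = M$(p i)$l" for l
    by (simp add: matrix_matrix_mult_def transpose_def perm_matrix_def
        if_distrib[of "\<lambda>x. x * _"] sum.delta cong: if_cong)
  then show ?thesis
    by (simp add: matrix_matrix_mult_def perm_matrix_def if_distrib[of "\<lambda>x. _ * x"] sum.delta'
        cong: if_cong)
qed

lemma perm_matrix_conj_diag:
  assumes "inj p"
  shows "transpose (perm_matrix p) ** diag d ** perm_matrix p = diag (\<chi> i. d$(p i))"
  using assms by (simp add: vec_eq_iff perm_matrix_conj_nth inj_eq)

lemma orthogonal_perm_matrix:
  assumes "inj p"
  shows "orthogonal_matrix (perm_matrix p)"
proof -
  have "transpose (perm_matrix p) ** mat 1 ** perm_matrix p = mat 1"
    using perm_matrix_conj_diag[OF assms, of "\<chi> i. 1"] by (simp add: mat_1_eq_diag)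
  then have "transpose (perm_matrix p) ** perm_matrix p = mat 1" by simp
  then show ?thesis
    using matrix_left_right_inverse by (auto simp: orthogonal_matrix_def)
qed

lemma axis_comp_transpose:
  "(\<chi> i. axis k c $ Transposition.transpose a b i) = axis (Transposition.transpose a b k) c"
  by (auto simp: vec_eq_iff axis_def transpose_eq_iff)

text \<open>The constants are a diagonal and an off-diagonal entry of \<open>h (axis k 1)\<close>; transpositions
  show that these entries do not depend on the indices.\<close>
lemma linear_diagonal_perm_equivariant:
  fixes h :: "real^'n \<Rightarrow> real^'n^'n"
  assumes lin: "linear h" and offdiag: "\<And>x i j. i \<noteq> j \<Longrightarrow> h x $ i $ j = 0"
    and equiv: "\<And>p x. inj p \<Longrightarrow> h (\<chi> i. x$(p i)) = transpose (perm_matrix p) ** h x ** perm_matrix p"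
  obtains a b where "\<And>x. h x = a *\<^sub>R diag x + (b * (\<Sum>i\<in>UNIV. x$i)) *\<^sub>R mat 1"
proof -
  define D where "D k i = h (axis k 1) $ i $ i" for k i
  have swap: "D (Transposition.transpose a b k) i = D k (Transposition.transpose a b i)" for a b k i
    using equiv[of "Transposition.transpose a b" "axis k 1"]
    by (simp add: D_def axis_comp_transpose perm_matrix_conj_nth)
  have diag_const: "D k k = D a a" for k a
    using swap[of a k a k] by simp
  have off_row: "D k i = D k j" if "i \<noteq> k" "j \<noteq> k" for k i j
    using swap[of i j k i] that by simp
  have off_const: "D k i = D a j" if "i \<noteq> k" "j \<noteq> a" for k i a j
  proof (cases "a = k")
    case False
    with that have "a \<noteq> k" "i \<noteq> k" "k \<noteq> a" "j \<noteq> a" by auto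
    then have "D k i = D k a" by (intro off_row)
    also have "\<dots> = D a k" using swap[of k a k k] by simp
    also have "\<dots> = D a j" using \<open>k \<noteq> a\<close> \<open>j \<noteq> a\<close> by (intro off_row)
    finally show ?thesis .
  next
    case True
    with that show ?thesis using off_row[of i k j] by simp
  qed
  fix k0 :: 'n
  obtain \<beta> where \<beta>: "\<And>k i. i \<noteq> k \<Longrightarrow> D k i = \<beta>"
  proof (cases "\<exists>k i::'n. i \<noteq> k")
    case True
    then obtain k1 i1 :: 'n where "i1 \<noteq> k1" by blast
    show ?thesis
    proof (rule that)
      fix k i :: 'n
      assume "i \<noteq> k"
      then show "D k i = D k1 i1" using off_const[of i k i1 k1] \<open>i1 \<noteq> k1\<close> by simp
    qed
  qed auto
  define \<alpha> where "\<alpha> = D k0 k0"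
  have D_eq: "D k i = (if k = i then \<alpha> else \<beta>)" for k i
    using diag_const[of k k0] \<beta>[of i k] unfolding \<alpha>_def by (cases "k = i") simp_all
  have "h x = (\<alpha> - \<beta>) *\<^sub>R diag x + (\<beta> * (\<Sum>i\<in>UNIV. x$i)) *\<^sub>R mat 1" for x
  proof -
    have "h x = h (\<Sum>k\<in>UNIV. x$k *\<^sub>R axis k 1)"
      using basis_expansion[of x] by (simp add: scalar_mult_eq_scaleR)
    also have "\<dots> = (\<Sum>k\<in>UNIV. x$k *\<^sub>R h (axis k 1))"
      by (simp add: linear_sum[OF lin] linear_scale[OF lin])
    finally have hx: "h x = (\<Sum>k\<in>UNIV. x$k *\<^sub>R h (axis k 1))" .
    have "h x $ i $ i = (\<alpha> - \<beta>) * x$i + \<beta> * (\<Sum>i\<in>UNIV. x$i)" for i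
    proof -
      have "h x $ i $ i = (\<Sum>k\<in>UNIV. x$k * D k i)" unfolding hx by (simp add: D_def)
      also have "\<dots> = (\<Sum>k\<in>UNIV. \<beta> * x$k + (if k = i then (\<alpha> - \<beta>) * x$k else 0))"
        by (rule sum.cong) (simp_all add: D_eq algebra_simps)
      also have "\<dots> = (\<alpha> - \<beta>) * x$i + \<beta> * (\<Sum>i\<in>UNIV. x$i)"
        by (simp add: sum.distrib sum_distrib_left)
      finally show ?thesis .
    qed
    then show ?thesis by (simp add: vec_eq_iff offdiag mat_def)
  qed
  then show ?thesis by (rule that)
qed

section \<open>Isotropic maps on positive definite matrices\<close>

definition isotropic :: "(mat3 \<Rightarrow> mat3) \<Rightarrow> bool" where
  "isotropic T \<longleftrightarrow> (\<forall>Q U. orthogonal_matrix Q \<longrightarrow> U \<in> PSym3 \<longrightarrow>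
     T (transpose Q ** U ** Q) = transpose Q ** T U ** Q)"

lemma isotropicD:
  "isotropic T \<Longrightarrow> orthogonal_matrix Q \<Longrightarrow> U \<in> PSym3 \<Longrightarrow>
     T (transpose Q ** U ** Q) = transpose Q ** T U ** Q"
  by (simp add: isotropic_def)

lemma linear_on_diag_exp:
  fixes T :: "mat3 \<Rightarrow> mat3"
  assumes cont: "continuous_on PSym3 T"
    and add: "\<And>U1 U2. U1 \<in> PSym3 \<Longrightarrow> U2 \<in> PSym3 \<Longrightarrow> U1 ** U2 = U2 ** U1 \<Longrightarrow>
                T (U1 ** U2) = T U1 + T U2"
  shows "linear (\<lambda>x. T (diag_exp x))"
proof (rule additive_continuous_imp_linear)
  show "T (diag_exp (x + y)) = T (diag_exp x) + T (diag_exp y)" for x y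
    unfolding diag_exp_add
    by (rule add[OF diag_exp_in_PSym3 diag_exp_in_PSym3]) (metis add.commute diag_exp_add)
  show "continuous_on UNIV (\<lambda>x. T (diag_exp x))"
    by (rule continuous_on_compose2[OF cont continuous_on_diag_exp]) (auto intro: diag_exp_in_PSym3)
qed

text \<open>The reflection in the \<open>i\<close>-th coordinate fixes \<open>diag_exp x\<close> but flips the sign of row \<open>i\<close>.\<close>
lemma isotropic_diag_exp_offdiag:
  fixes T :: "mat3 \<Rightarrow> mat3"
  assumes iso: "isotropic T" and "i \<noteq> j"
  shows "T (diag_exp x) $ i $ j = 0"
proof -
  define S :: mat3 where "S = diag (\<chi> k. if k = i then -1 else 1)"
  have "S ** S = mat 1" by (simp add: S_def diag_mult_diag mat_1_eq_diag vec_eq_iff)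
  then have "orthogonal_matrix S" by (simp add: S_def orthogonal_matrix_def)
  moreover have "transpose S ** diag_exp x ** S = diag_exp x"
    by (simp add: S_def diag_exp_def diag_mult_diag vec_eq_iff)
  ultimately have "T (diag_exp x) = transpose S ** T (diag_exp x) ** S"
    using isotropicD[OF iso, of S "diag_exp x"] diag_exp_in_PSym3 by simp
  moreover have "(transpose S ** M ** S)$i$j = - M$i$j" for M
    using \<open>i \<noteq> j\<close> by (simp add: S_def matrix_mult_diag_right_nth diag_matrix_mult_left_nth)
  ultimately have "T (diag_exp x) $ i $ j = - T (diag_exp x) $ i $ j" by metis
  then show ?thesis by simp
qed

lemma isotropic_diag_exp_perm:
  fixes T :: "mat3 \<Rightarrow> mat3"
  assumes iso: "isotropic T" and p: "inj p"
  shows "T (diag_exp (\<chi> i. x$(p i))) = transpose (perm_matrix p) ** T (diag_exp x) ** perm_matrix p"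
  using isotropicD[OF iso orthogonal_perm_matrix[OF p] diag_exp_in_PSym3, of x]
  by (simp add: diag_exp_def perm_matrix_conj_diag[OF p])

lemma isotropic_log_form:
  fixes T :: "mat3 \<Rightarrow> mat3"
  assumes iso: "isotropic T"
    and form: "\<And>x. T (diag_exp x) = a *\<^sub>R diag x + (b * (\<Sum>i\<in>UNIV. x$i)) *\<^sub>R mat 1"
    and U: "U \<in> PSym3"
  shows "T U = a *\<^sub>R mlog U + (b * trace (mlog U)) *\<^sub>R mat 1"
proof -
  obtain Q x where Q: "orthogonal_matrix Q" and U_eq: "U = transpose Q ** diag_exp x ** Q"
    using PSym3_orthogonal_conj_diag_exp[OF U] by blast
  have log: "mlog U = transpose Q ** diag x ** Q"
    unfolding U_eq by (rule mlog_orthogonal_conj_diag_exp[OF Q])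
  have trace_log: "trace (mlog U) = (\<Sum>i\<in>UNIV. x$i)"
    unfolding log trace_orthogonal_conj[OF Q] by (simp add: trace_def)
  have "T U = transpose Q ** (a *\<^sub>R diag x + (b * (\<Sum>i\<in>UNIV. x$i)) *\<^sub>R mat 1) ** Q"
    unfolding U_eq isotropicD[OF iso Q diag_exp_in_PSym3] form ..
  also have "\<dots> = a *\<^sub>R (transpose Q ** diag x ** Q) + (b * (\<Sum>i\<in>UNIV. x$i)) *\<^sub>R (transpose Q ** Q)"
    by (simp add: matrix_add_ldistrib matrix_add_rdistrib matrix_scalar_ac scalar_matrix_assoc)
  finally show ?thesis
    using Q trace_log unfolding log by (simp add: orthogonal_matrix_def)
qed

lemma diag_exp_eq_1_iff: "diag_exp x = mat 1 \<longleftrightarrow> x = 0"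
  by (auto simp: diag_exp_def mat_def vec_eq_iff)

lemma diag_form_coeffs_nonzero:
  fixes T :: "mat3 \<Rightarrow> mat3"
  assumes zero: "\<And>U. U \<in> PSym3 \<Longrightarrow> (T U = 0 \<longleftrightarrow> U = mat 1)"
    and form: "\<And>x. T (diag_exp x) = a *\<^sub>R diag x + (b * (\<Sum>i\<in>UNIV. x$i)) *\<^sub>R mat 1"
  shows "a \<noteq> 0" and "a + 3 * b \<noteq> 0"
proof -
  have nonzero: "T (diag_exp x) \<noteq> 0" if "x \<noteq> 0" for x :: "real^3"
    using zero[OF diag_exp_in_PSym3] that diag_exp_eq_1_iff by blast
  show "a \<noteq> 0"
  proof
    assume "a = 0"
    then have "T (diag_exp (vector [1, -1, 0])) = 0" by (simp add: form sum_3)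
    moreover have "(vector [1, -1, 0] :: real^3) \<noteq> 0" by (metis vector_3(1) zero_index one_neq_zero)
    ultimately show False using nonzero by blast
  qed
  show "a + 3 * b \<noteq> 0"
  proof
    assume "a + 3 * b = 0"
    then have "T (diag_exp (vector [1, 1, 1])) = 0"
      by (simp add: form sum_3 vec_eq_iff forall_3 mat_def algebra_simps)
    moreover have "(vector [1, 1, 1] :: real^3) \<noteq> 0" by (metis vector_3(1) zero_index one_neq_zero)
    ultimately show False using nonzero by blast
  qed
qed

theorem mainTheorem9:
  fixes T :: "mat3 \<Rightarrow> mat3"
  assumes range: "\<And>U. U \<in> PSym3 \<Longrightarrow> T U \<in> Sym3"
    and cont: "continuous_on PSym3 T"
    and iso: "\<And>Q U. orthogonal_matrix Q \<Longrightarrow> U \<in> PSym3 \<Longrightarrow>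
                 T (transpose Q ** U ** Q) = transpose Q ** T U ** Q"
    and zero: "\<And>U. U \<in> PSym3 \<Longrightarrow> (T U = 0 \<longleftrightarrow> U = mat 1)"
    and add: "\<And>U1 U2. U1 \<in> PSym3 \<Longrightarrow> U2 \<in> PSym3 \<Longrightarrow> U1 ** U2 = U2 ** U1 \<Longrightarrow>
                 T (U1 ** U2) = T U1 + T U2"
  shows "(\<exists>G \<Lambda>::real. G \<noteq> 0 \<and> 3 * \<Lambda> + 2 * G \<noteq> 0 \<and>
            (\<forall>U \<in> PSym3. T U = (2 * G) *\<^sub>R mlog U + (\<Lambda> * trace (mlog U)) *\<^sub>R mat 1))
       \<and> (\<exists>G K::real. G \<noteq> 0 \<and> K \<noteq> 0 \<and>
            (\<forall>U \<in> PSym3. T U = (2 * G) *\<^sub>R dev3 (mlog U) + (K * trace (mlog U)) *\<^sub>R mat 1))"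
proof -
  have "isotropic T" using iso by (simp add: isotropic_def)
  then obtain a b where form: "\<And>x. T (diag_exp x) = a *\<^sub>R diag x + (b * (\<Sum>i\<in>UNIV. x$i)) *\<^sub>R mat 1"
    using linear_diagonal_perm_equivariant[OF linear_on_diag_exp[OF cont add]
        isotropic_diag_exp_offdiag[OF \<open>isotropic T\<close>] isotropic_diag_exp_perm[OF \<open>isotropic T\<close>]]
    by blast
  have T_eq: "T U = a *\<^sub>R mlog U + (b * trace (mlog U)) *\<^sub>R mat 1" if "U \<in> PSym3" for U
    using isotropic_log_form[OF \<open>isotropic T\<close> form that] .
  have a: "a \<noteq> 0" and ab: "a + 3 * b \<noteq> 0"
    using diag_form_coeffs_nonzero[OF zero form] by auto
  have T_dev: "T U = (2 * (a / 2)) *\<^sub>R dev3 (mlog U) + ((a + 3 * b) / 3 * trace (mlog U)) *\<^sub>R mat 1"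
    if "U \<in> PSym3" for U
    unfolding T_eq[OF that] dev3_def
    by (simp add: scaleR_diff_right algebra_simps add_divide_distrib flip: scaleR_add_left)
  have "\<exists>G \<Lambda>::real. G \<noteq> 0 \<and> 3 * \<Lambda> + 2 * G \<noteq> 0 \<and>
      (\<forall>U \<in> PSym3. T U = (2 * G) *\<^sub>R mlog U + (\<Lambda> * trace (mlog U)) *\<^sub>R mat 1)"
    using a ab T_eq by (intro exI[of _ "a / 2"] exI[of _ b]) (simp add: add.commute)
  moreover have "\<exists>G K::real. G \<noteq> 0 \<and> K \<noteq> 0 \<and>
      (\<forall>U \<in> PSym3. T U = (2 * G) *\<^sub>R dev3 (mlog U) + (K * trace (mlog U)) *\<^sub>R mat 1)"
    using a ab T_dev by (intro exI[of _ "a / 2"] exI[of _ "(a + 3 * b) / 3"]) simp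
  ultimately show ?thesis ..
qed

end
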